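(* Let $\mu$ be a Borel probability measure on $[0,1]$. (1) There is a constant $c$ independent of $N$ such that for every $N\in\mathbb{N}$ there exist points $x_1,\dots,x_N\in[0,1]$ with $D^*_N\big(\mu;\frac1N\sum_{i=1}^N\delta_{x_i}\big)\leq \frac{c}{N}$. (2) There exist a sequence $(x_k)_{k\in\mathbb{N}}\subseteq[0,1]$ and a constant $c$ independent of $N$ such that for all integers $N\geq2$, $D^*_N\big(\mu;\frac1N\sum_{i=1}^N\delta_{x_i}\big)\leq c\frac{\log N}{N}$. (3) Suppose $\mu$ has no point masses (i.e. $\mu(\{x\})=0$ for all $x\in[0,1]$). Then for every $N$ and every finite set $x_1,\dots,x_N\in[0,1]$, $D^*_N\big(\mu;\frac1N\sum_{i=1}^N\delta_{x_i}\big)\geq\frac{1}{2N}$. Moreover, there is a constant $c>0$ such that for every sequence $(x_k)_{k\in\mathbb{N}}\subseteq[0,1]$, the inequality $D^*_N\big(\mu;\frac1N\sum_{i=1}^N\delta_{x_i}\big)\geq c\frac{\log N}{N}$ holds for infinitely many $N\in\mathbb{N}$.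
   Context: $\delta_y$ denotes the Dirac measure at $y$. For probability measures $\mu,\nu$ on $[0,1]$, the star-discrepancy is $D^*_N(\mu;\nu)=\sup_{b\in[0,1]}|\mu([0,b))-\nu([0,b))|$ (supremum over half-open intervals anchored at $0$). *)

theory Defs
  imports "HOL-Probability.Probability"
begin

definition star_disc :: "real measure \<Rightarrow> (nat \<Rightarrow> real) \<Rightarrow> nat \<Rightarrow> real" where
  "star_disc M x N =
     (SUP b\<in>{0..1}. \<bar>measure M {0..<b} - real (card {i\<in>{1..N}. x i \<in> {0..<b}}) / real N\<bar>)"

text \<open>Borel probability measure on [0,1] (as a measure on the real line concentrated on [0,1]).\<close>
definition borel_prob_on_unit :: "real measure \<Rightarrow> bool" where
  "borel_prob_on_unit M \<longleftrightarrow> prob_space M \<and> sets M = sets borel \<and> measure M {0..1} = 1"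

end

theory Submission
  imports Defs
begin

(* Write F b = \<mu>[0,b) and Q for the quantile function of \<mu>.  Since Q u < b exactly when u < F b,
   the points Q v_i have the same star discrepancy with respect to \<mu> as the v_i have with respect
   to Lebesgue measure, evaluated at the levels F b.  Pulling back the grid (i-1)/N and the van der
   Corput sequence, with discrepancies 1/N and O(log N / N), gives the upper bounds.

   Without atoms F is continuous.  The count jumps by 1/N at a point x_j while F does not, which
   gives the bound 1/(2N).  The logarithmic lower bound is Schmidt's theorem: quantising F (x (i+1))
   to 2^(m+2) levels turns the first 2^m points into the planar point set {(i, c i)}, and Halasz's
   Riesz-product argument finds n < 2^m and a level j at which the box [0,n) \<times> [0,j) has
   discrepancy at least m/2000.  As F attains every level, this is a discrepancy of \<mu> at N = n;
   choosing m \<approx> 2000 N0 beats a bound (log N)/(2000 N) assumed for all N \<ge> N0. *)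

section \<open>Haar functions on dyadic blocks\<close>

lemma sum_lessThan_mult_blocks:
  fixes g :: "nat \<Rightarrow> 'a::comm_monoid_add"
  shows "(\<Sum>x<A*W. g x) = (\<Sum>b<A. \<Sum>r<W. g (b*W + r))"
proof -
  have "(\<Sum>r<W. g (b*W + r)) = sum g {b*W..<b*W + W}" for b
    using sum.shift_bounds_nat_ivl[of g 0 "b*W" W] by (simp add: atLeast0LessThan add.commute)
  then show ?thesis by (simp add: sum.nat_group)
qed

lemma div_eq_imp_div_power_eq:
  fixes x y :: nat
  assumes "x div 2^a = y div 2^a" "a \<le> e"
  shows "x div 2^e = y div 2^e"
proof -
  have "(2::nat)^e = 2^a * 2^(e-a)" using assms(2) by (simp flip: power_add)
  then show ?thesis using assms(1) by (simp add: div_mult2_eq)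
qed

lemma outside_block_if_div_neq:
  fixes x b w :: nat
  assumes "x div w \<noteq> b"
  shows "x < b*w \<or> b*w + w \<le> x"
proof (rule ccontr)
  assume "\<not> ?thesis"
  then have "x div w = b" by (auto intro: div_nat_eqI simp: mult.commute)
  with assms show False ..
qed

definition haar :: "nat \<Rightarrow> nat \<Rightarrow> real" where
  "haar h r = (if r < h then 1 else -1)"

lemma abs_haar [simp]: "\<bar>haar h r\<bar> = 1"
  by (simp add: haar_def)

lemma sum_haar_split:
  fixes g :: "nat \<Rightarrow> real"
  shows "(\<Sum>r<2*h. haar h r * g r) = (\<Sum>r<h. g r) - (\<Sum>r<h. g (h + r))"
  using sum_lessThan_mult_blocks[of "\<lambda>r. haar h r * g r" 2 h]
  by (simp add: numeral_2_eq_2 haar_def sum_negf add.commute)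

lemma sum_haar: "(\<Sum>r<2*h. haar h r) = 0"
  using sum_haar_split[of h "\<lambda>_. 1"] by simp

lemma sum_haar_times_linear: "(\<Sum>r<2*h. haar h r * real (B + r)) = - (real h * real h)"
  by (simp add: sum_haar_split flip: sum_subtractf)

lemma sum_haar_times_threshold:
  assumes "x div (2*h) \<noteq> b"
  shows "(\<Sum>r<2*h. haar h r * of_bool (x < b*(2*h) + r)) = 0"
proof (cases "x < b*(2*h)")
  case True
  then show ?thesis by (simp add: sum_haar)
next
  case False
  with outside_block_if_div_neq[OF assms] show ?thesis by (intro sum.neutral) auto
qed

definition dyadic_haar :: "nat \<Rightarrow> nat \<Rightarrow> real" where
  "dyadic_haar e x = haar (2^e) (x mod (2 * 2^e))"

lemma abs_dyadic_haar [simp]: "\<bar>dyadic_haar e x\<bar> = 1"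
  by (simp add: dyadic_haar_def)

lemma dyadic_haar_block [simp]:
  "r < 2 * 2^e \<Longrightarrow> dyadic_haar e (b * (2 * 2^e) + r) = haar (2^e) r"
  by (simp add: dyadic_haar_def)

lemma dyadic_haar_div_eq:
  assumes "x div 2^e = y div 2^e"
  shows "dyadic_haar e x = dyadic_haar e y"
proof -
  have "x mod (2 * 2^e) < 2^e \<longleftrightarrow> even (x div 2^e)" for x :: nat
    using mod_mult2_eq[of x "2^e" 2] mod_less_divisor[of "2^e" x]
    by (cases "even (x div 2^e)") (auto simp: mult.commute odd_iff_mod_2_eq_one)
  then show ?thesis using assms by (simp add: dyadic_haar_def haar_def)
qed

lemma sum_dyadic_haar_blocks:
  assumes "\<And>j j'. j div (2 * 2^e) = j' div (2 * 2^e) \<Longrightarrow> u j = u j'"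
  shows "(\<Sum>j<S * (2 * 2^e). u j * dyadic_haar e j) = 0"
proof -
  have "u (s * (2 * 2^e) + q) = u (s * (2 * 2^e))" if "q < 2 * 2^e" for s q
    by (rule assms) (use that in simp)
  then have "(\<Sum>j<S * (2 * 2^e). u j * dyadic_haar e j)
      = (\<Sum>s<S. u (s * (2 * 2^e)) * (\<Sum>q<2 * 2^e. haar (2^e) q))"
    unfolding sum_lessThan_mult_blocks[of _ S] sum_distrib_left by (intro sum.cong refl) simp
  then show ?thesis by (simp add: sum_haar)
qed

lemma card_less_eq_sum_of_bool:
  fixes c :: "nat \<Rightarrow> nat"
  assumes "n \<le> N"
  shows "real (card {i. i < n \<and> c i < j}) = (\<Sum>i<N. of_bool (i < n) * of_bool (c i < j))"
proof -
  have "(\<Sum>i<N. of_bool (i < n) * of_bool (c i < j)) = (\<Sum>i<N. of_bool (i < n \<and> c i < j) :: real)"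
    by (simp only: of_bool_conj)
  also have "\<dots> = real (card ({..<N} \<inter> {i. i < n \<and> c i < j}))"
    by (intro sum_of_bool_eq finite_lessThan)
  also have "{..<N} \<inter> {i. i < n \<and> c i < j} = {i. i < n \<and> c i < j}"
    using assms by auto
  finally show ?thesis ..
qed

(* Written as a sum over the points, the count contributes for each point a product of two
   threshold sums, and for a point outside the box one of the two vanishes. *)
lemma haar_box_sum_card:
  fixes c :: "nat \<Rightarrow> nat"
  assumes N: "Suc b * (2*ht) \<le> N"
    and empty: "\<forall>i<N. \<not> (i div (2*ht) = b \<and> c i div (2*hs) = s)"
  shows "(\<Sum>r<2*ht. \<Sum>q<2*hs.
            real (card {i. i < b*(2*ht) + r \<and> c i < s*(2*hs) + q}) * haar ht r * haar hs q) = 0"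
proof -
  have card_eq: "real (card {i. i < b*(2*ht) + r \<and> c i < j})
      = (\<Sum>i<N. of_bool (i < b*(2*ht) + r) * of_bool (c i < j))" if "r < 2*ht" for r j
    using N that by (intro card_less_eq_sum_of_bool) simp
  have "(\<Sum>r<2*ht. \<Sum>q<2*hs.
        real (card {i. i < b*(2*ht) + r \<and> c i < s*(2*hs) + q}) * haar ht r * haar hs q)
      = (\<Sum>r<2*ht. \<Sum>q<2*hs. \<Sum>i<N. (haar ht r * of_bool (i < b*(2*ht) + r))
                                      * (haar hs q * of_bool (c i < s*(2*hs) + q)))"
    by (intro sum.cong refl) (simp only: lessThan_iff card_eq, simp only: sum_distrib_left sum_distrib_right mult_ac)
  also have "\<dots> = (\<Sum>r<2*ht. \<Sum>i<N. \<Sum>q<2*hs. (haar ht r * of_bool (i < b*(2*ht) + r))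
                                      * (haar hs q * of_bool (c i < s*(2*hs) + q)))"
    by (rule sum.cong[OF refl], rule sum.swap)
  also have "\<dots> = (\<Sum>i<N. (\<Sum>r<2*ht. haar ht r * of_bool (i < b*(2*ht) + r))
                         * (\<Sum>q<2*hs. haar hs q * of_bool (c i < s*(2*hs) + q)))"
    by (subst sum.swap) (simp only: sum_product)
  also have "\<dots> = 0"
  proof (rule sum.neutral, rule ballI)
    fix i assume "i \<in> {..<N}"
    then have "i div (2*ht) \<noteq> b \<or> c i div (2*hs) \<noteq> s" using empty by auto
    then show "(\<Sum>r<2*ht. haar ht r * of_bool (i < b*(2*ht) + r))
             * (\<Sum>q<2*hs. haar hs q * of_bool (c i < s*(2*hs) + q)) = 0"
    proof
      assume "i div (2*ht) \<noteq> b"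
      show ?thesis by (simp only: sum_haar_times_threshold[OF \<open>i div (2*ht) \<noteq> b\<close>] mult_zero_left)
    next
      assume "c i div (2*hs) \<noteq> s"
      show ?thesis by (simp only: sum_haar_times_threshold[OF \<open>c i div (2*hs) \<noteq> s\<close>] mult_zero_right)
    qed
  qed
  finally show ?thesis .
qed

lemma haar_box_sum_product:
  "(\<Sum>r<2*ht. \<Sum>q<2*hs. real (b*(2*ht) + r) * real (s*(2*hs) + q) * haar ht r * haar hs q)
     = (real ht * real hs)^2"
proof -
  have "(\<Sum>r<2*ht. \<Sum>q<2*hs. real (b*(2*ht) + r) * real (s*(2*hs) + q) * haar ht r * haar hs q)
      = (\<Sum>r<2*ht. haar ht r * real (b*(2*ht) + r)) * (\<Sum>q<2*hs. haar hs q * real (s*(2*hs) + q))"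
    unfolding sum_product by (intro sum.cong refl) (simp add: mult_ac)
  then show ?thesis by (simp only: sum_haar_times_linear) (simp add: power2_eq_square)
qed

lemma haar_box_sum_disc:
  fixes c :: "nat \<Rightarrow> nat"
  assumes "Suc b * (2*ht) \<le> N" and "\<forall>i<N. \<not> (i div (2*ht) = b \<and> c i div (2*hs) = s)"
  shows "(\<Sum>r<2*ht. \<Sum>q<2*hs.
            (real (card {i. i < b*(2*ht) + r \<and> c i < s*(2*hs) + q})
              - real (b*(2*ht) + r) * real (s*(2*hs) + q) / G) * haar ht r * haar hs q)
     = - ((real ht * real hs)^2 / G)"
proof -
  let ?card = "\<lambda>r q. real (card {i. i < b*(2*ht) + r \<and> c i < s*(2*hs) + q})"
    and ?lin = "\<lambda>r q. real (b*(2*ht) + r) * real (s*(2*hs) + q)"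
  have "(\<Sum>r<2*ht. \<Sum>q<2*hs. (?card r q - ?lin r q / G) * haar ht r * haar hs q)
      = (\<Sum>r<2*ht. \<Sum>q<2*hs. ?card r q * haar ht r * haar hs q - ?lin r q * haar ht r * haar hs q / G)"
    by (intro sum.cong refl) (simp only: left_diff_distrib times_divide_eq_left)
  also have "\<dots> = (\<Sum>r<2*ht. \<Sum>q<2*hs. ?card r q * haar ht r * haar hs q)
        - (\<Sum>r<2*ht. \<Sum>q<2*hs. ?lin r q * haar ht r * haar hs q) / G"
    by (simp only: sum_subtractf sum_divide_distrib)
  also have "\<dots> = - ((real ht * real hs)^2 / G)"
    by (simp only: haar_box_sum_card[OF assms] haar_box_sum_product diff_0)
  finally show ?thesis .
qed

lemma haar_box_sum_disc_weighted:
  fixes c :: "nat \<Rightarrow> nat" and g :: "nat \<Rightarrow> nat \<Rightarrow> real"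
  assumes N: "Suc b * (2*ht) \<le> N"
    and const: "\<And>r q. r < 2*ht \<Longrightarrow> q < 2*hs \<Longrightarrow> g (b*(2*ht) + r) (s*(2*hs) + q) = g (b*(2*ht)) (s*(2*hs))"
    and empty: "g (b*(2*ht)) (s*(2*hs)) \<noteq> 0 \<Longrightarrow> \<forall>i<N. \<not> (i div (2*ht) = b \<and> c i div (2*hs) = s)"
  shows "(\<Sum>r<2*ht. \<Sum>q<2*hs.
            (real (card {i. i < b*(2*ht) + r \<and> c i < s*(2*hs) + q})
              - real (b*(2*ht) + r) * real (s*(2*hs) + q) / G) * g (b*(2*ht) + r) (s*(2*hs) + q)
            * haar ht ((b*(2*ht) + r) mod (2*ht)) * haar hs ((s*(2*hs) + q) mod (2*hs)))
     = - ((real ht * real hs)^2 / G) * g (b*(2*ht)) (s*(2*hs))"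
proof -
  let ?D = "\<lambda>r q. (real (card {i. i < b*(2*ht) + r \<and> c i < s*(2*hs) + q})
      - real (b*(2*ht) + r) * real (s*(2*hs) + q) / G) * haar ht r * haar hs q"
  have "(real (card {i. i < b*(2*ht) + r \<and> c i < s*(2*hs) + q})
          - real (b*(2*ht) + r) * real (s*(2*hs) + q) / G) * g (b*(2*ht) + r) (s*(2*hs) + q)
        * haar ht ((b*(2*ht) + r) mod (2*ht)) * haar hs ((s*(2*hs) + q) mod (2*hs))
      = ?D r q * g (b*(2*ht)) (s*(2*hs))"
    if "r < 2*ht" "q < 2*hs" for r q
  proof -
    have "(b*(2*ht) + r) mod (2*ht) = r" "(s*(2*hs) + q) mod (2*hs) = q" using that by simp_all
    then show ?thesis unfolding const[OF that] by (simp only: mult_ac)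
  qed
  then have "(\<Sum>r<2*ht. \<Sum>q<2*hs.
            (real (card {i. i < b*(2*ht) + r \<and> c i < s*(2*hs) + q})
              - real (b*(2*ht) + r) * real (s*(2*hs) + q) / G) * g (b*(2*ht) + r) (s*(2*hs) + q)
            * haar ht ((b*(2*ht) + r) mod (2*ht)) * haar hs ((s*(2*hs) + q) mod (2*hs)))
      = (\<Sum>r<2*ht. \<Sum>q<2*hs. ?D r q) * g (b*(2*ht)) (s*(2*hs))"
    unfolding sum_distrib_right by (intro sum.cong refl) simp
  then show ?thesis
    using haar_box_sum_disc[OF N empty] by (cases "g (b*(2*ht)) (s*(2*hs)) = 0") simp_all
qed

lemma sum_disc_haar_empty_boxes:
  fixes c :: "nat \<Rightarrow> nat" and g :: "nat \<Rightarrow> nat \<Rightarrow> real"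
  assumes N: "N = A * (2*ht)" and ht: "0 < ht" and hs: "0 < hs"
    and const: "\<And>n n' j j'. n div (2*ht) = n' div (2*ht) \<Longrightarrow> j div (2*hs) = j' div (2*hs) \<Longrightarrow> g n j = g n' j'"
    and empty: "\<And>n j i. g n j \<noteq> 0 \<Longrightarrow> i < N \<Longrightarrow> \<not> (i div (2*ht) = n div (2*ht) \<and> c i div (2*hs) = j div (2*hs))"
  shows "(\<Sum>n<N. \<Sum>j<S*(2*hs). (real (card {i. i < n \<and> c i < j}) - real n * real j / G)
            * g n j * haar ht (n mod (2*ht)) * haar hs (j mod (2*hs)))
     = - ((real ht * real hs)^2 / G) * (\<Sum>b<A. \<Sum>s<S. g (b*(2*ht)) (s*(2*hs)))"
proof -
  define T where "T n j = (real (card {i. i < n \<and> c i < j}) - real n * real j / G)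
      * g n j * haar ht (n mod (2*ht)) * haar hs (j mod (2*hs))" for n j
  have box: "(\<Sum>r<2*ht. \<Sum>q<2*hs. T (b*(2*ht) + r) (s*(2*hs) + q))
      = - ((real ht * real hs)^2 / G) * g (b*(2*ht)) (s*(2*hs))" if "b < A" for b s
    unfolding T_def
  proof (rule haar_box_sum_disc_weighted)
    show "Suc b * (2*ht) \<le> N" using that N mult_le_mono1[of "Suc b" A "2*ht"] by simp
    show "g (b*(2*ht) + r) (s*(2*hs) + q) = g (b*(2*ht)) (s*(2*hs))" if "r < 2*ht" "q < 2*hs" for r q
      by (rule const) (use that ht hs in simp_all)
    show "\<forall>i<N. \<not> (i div (2*ht) = b \<and> c i div (2*hs) = s)" if "g (b*(2*ht)) (s*(2*hs)) \<noteq> 0"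
      using empty[OF that] ht hs by simp
  qed
  have "(\<Sum>n<N. \<Sum>j<S*(2*hs). T n j)
      = (\<Sum>b<A. \<Sum>s<S. \<Sum>r<2*ht. \<Sum>q<2*hs. T (b*(2*ht) + r) (s*(2*hs) + q))"
    unfolding N sum_lessThan_mult_blocks[of _ A] sum_lessThan_mult_blocks[of _ S]
    by (rule sum.cong[OF refl], rule sum.swap)
  also have "\<dots> = - ((real ht * real hs)^2 / G) * (\<Sum>b<A. \<Sum>s<S. g (b*(2*ht)) (s*(2*hs)))"
    unfolding sum_distrib_left by (intro sum.cong refl) (simp add: box)
  finally show ?thesis unfolding T_def .
qed

section \<open>Halasz's Riesz product on a dyadic grid\<close>

definition dyadic_const :: "nat \<Rightarrow> nat \<Rightarrow> (nat \<Rightarrow> nat \<Rightarrow> real) \<Rightarrow> bool" where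
  "dyadic_const e1 e2 g \<longleftrightarrow>
     (\<forall>n n' j j'. n div 2^e1 = n' div 2^e1 \<longrightarrow> j div 2^e2 = j' div 2^e2 \<longrightarrow> g n j = g n' j')"

lemma dyadic_constI:
  "(\<And>n n' j j'. n div 2^e1 = n' div 2^e1 \<Longrightarrow> j div 2^e2 = j' div 2^e2 \<Longrightarrow> g n j = g n' j')
    \<Longrightarrow> dyadic_const e1 e2 g"
  unfolding dyadic_const_def by blast

lemma dyadic_constD:
  "dyadic_const e1 e2 g \<Longrightarrow> n div 2^e1 = n' div 2^e1 \<Longrightarrow> j div 2^e2 = j' div 2^e2 \<Longrightarrow> g n j = g n' j'"
  unfolding dyadic_const_def by blast

lemma dyadic_const_mono:
  assumes "dyadic_const e1 e2 g" "e1' \<le> e1" "e2' \<le> e2"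
  shows "dyadic_const e1' e2' g"
proof (rule dyadic_constI)
  fix n n' j j' :: nat
  assume n: "n div 2^e1' = n' div 2^e1'" and j: "j div 2^e2' = j' div 2^e2'"
  show "g n j = g n' j'"
    using assms(1) div_eq_imp_div_power_eq[OF n assms(2)] div_eq_imp_div_power_eq[OF j assms(3)]
    by (rule dyadic_constD)
qed

lemma dyadic_const_mult:
  assumes "dyadic_const e1 e2 g" "dyadic_const e1 e2 h"
  shows "dyadic_const e1 e2 (\<lambda>n j. g n j * h n j)"
proof (rule dyadic_constI)
  fix n n' j j' :: nat
  assume "n div 2^e1 = n' div 2^e1" "j div 2^e2 = j' div 2^e2"
  then show "g n j * h n j = g n' j' * h n' j'"
    using dyadic_constD[OF assms(1)] dyadic_constD[OF assms(2)] by metis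
qed

lemma dyadic_const_comp:
  assumes "dyadic_const e1 e2 g"
  shows "dyadic_const e1 e2 (\<lambda>n j. \<phi> (g n j))"
proof (rule dyadic_constI)
  fix n n' j j' :: nat
  assume "n div 2^e1 = n' div 2^e1" "j div 2^e2 = j' div 2^e2"
  then show "\<phi> (g n j) = \<phi> (g n' j')" using dyadic_constD[OF assms] by metis
qed

lemma dyadic_const_prod:
  assumes "\<And>p. p \<in> P \<Longrightarrow> dyadic_const e1 e2 (g p)"
  shows "dyadic_const e1 e2 (\<lambda>n j. \<Prod>p\<in>P. g p n j)"
proof (rule dyadic_constI)
  fix n n' j j' :: nat
  assume "n div 2^e1 = n' div 2^e1" "j div 2^e2 = j' div 2^e2"
  then show "(\<Prod>p\<in>P. g p n j) = (\<Prod>p\<in>P. g p n' j')"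
    by (intro prod.cong refl) (rule dyadic_constD[OF assms])
qed

lemma dyadic_const_haar_row: "dyadic_const e1 e2 (\<lambda>n j. dyadic_haar e1 n)"
  by (rule dyadic_constI) (rule dyadic_haar_div_eq)

lemma dyadic_const_haar_col: "dyadic_const e1 e2 (\<lambda>n j. dyadic_haar e2 j)"
  by (rule dyadic_constI) (rule dyadic_haar_div_eq)

lemma sum_geometric_cross_bound:
  "(\<Sum>a\<in>{1..k}. (1/2::real)^(Suc k - a) * (5/4)^(k - a)) \<le> 4/3"
proof (induction k)
  case 0
  then show ?case by simp
next
  case (Suc k)
  have "(\<Sum>a\<in>{1..Suc k}. (1/2::real)^(Suc (Suc k) - a) * (5/4)^(Suc k - a))
      = 1/2 + (\<Sum>a\<in>{1..k}. (1/2::real)^(Suc (Suc k) - a) * (5/4)^(Suc k - a))"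
    by (simp add: atLeastAtMostSuc_conv)
  also have "(\<Sum>a\<in>{1..k}. (1/2::real)^(Suc (Suc k) - a) * (5/4)^(Suc k - a))
      = 5/8 * (\<Sum>a\<in>{1..k}. (1/2::real)^(Suc k - a) * (5/4)^(k - a))"
    unfolding sum_distrib_left by (intro sum.cong refl) (simp add: Suc_diff_le)
  finally show ?case using Suc by simp
qed

lemma prod_one_plus_expand:
  fixes u :: "nat \<Rightarrow> real"
  shows "(\<Prod>p\<in>{1..k}. 1 + u p) = 1 + (\<Sum>a\<in>{1..k}. u a * (\<Prod>p\<in>{a<..k}. 1 + u p))"
proof (induction k)
  case 0
  then show ?case by simp
next
  case (Suc k)
  have insert_Suc: "{1..Suc k} = insert (Suc k) {1..k}" by (rule atLeastAtMostSuc_conv) simp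
  have "(\<Sum>a\<in>{1..Suc k}. u a * (\<Prod>p\<in>{a<..Suc k}. 1 + u p))
      = u (Suc k) + (\<Sum>a\<in>{1..k}. u a * (\<Prod>p\<in>{a<..Suc k}. 1 + u p))"
    unfolding insert_Suc by (simp add: greaterThanAtMost_empty)
  also have "(\<Sum>a\<in>{1..k}. u a * (\<Prod>p\<in>{a<..Suc k}. 1 + u p))
      = (\<Sum>a\<in>{1..k}. u a * (\<Prod>p\<in>{a<..k}. 1 + u p)) * (1 + u (Suc k))"
  proof -
    have "{a<..Suc k} = insert (Suc k) {a<..k}" if "a \<in> {1..k}" for a using that by auto
    then show ?thesis unfolding sum_distrib_right by (intro sum.cong refl) simp
  qed
  finally show ?case unfolding insert_Suc using Suc by (simp add: algebra_simps)
qed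

lemma dyadic_weight_eq:
  assumes "1 \<le> a" "a \<le> k" "k \<le> m"
  shows "((2::real)^(a-1) * 2^(m-k))^2 / 2^(m+2) * (2^(m-a) * 2^(k+1)) = 2^(2*m) / 8 * (1/2)^(k-a)"
proof -
  define a' d e where "a' = a - 1" "d = k - a" "e = m - k"
  then have s: "a - 1 = a'" "m - k = e" "m - a = d + e" "k - a = d" "m = Suc a' + d + e" "k = Suc a' + d"
    using assms by auto
  have "((2::real)^a' * 2^e)^2 / 2^(Suc a' + d + e + 2) * (2^(d+e) * 2^(Suc a' + d + 1)) * (8 * 2^d)
      = 2^(2*(Suc a' + d + e))"
    by (simp only: power_add power_Suc power_mult_distrib power2_eq_square mult_2) (simp add: field_simps)
  then have "((2::real)^(a-1) * 2^(m-k))^2 / 2^(m+2) * (2^(m-a) * 2^(k+1)) * (8 * 2^(k-a)) = 2^(2*m)"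
    unfolding s(1-4) unfolding s(5,6) .
  then show ?thesis by (simp add: field_simps power_one_over)
qed

(* Point i sits at (i, c i) in the grid {0..<2^m} \<times> {0..<2^(m+2)}, and local_disc n j is the
   discrepancy of the box [0,n) \<times> [0,j) against the density 2^-(m+2).  At level p the grid is
   tiled by 2^(m+1) boxes of size 2^p \<times> 2^(m+1-p); with only 2^m points at least half of them
   are empty, and r_fun p (Halasz's r-function) is minus the product Haar function on the empty
   boxes.  Then riesz k is the Riesz product of r_fun 1, ..., r_fun k. *)
locale dyadic_grid =
  fixes m :: nat and c :: "nat \<Rightarrow> nat"
begin

definition local_disc :: "nat \<Rightarrow> nat \<Rightarrow> real" where
  "local_disc n j = real (card {i. i < n \<and> c i < j}) - real n * real j / 2^(m+2)"

definition grid_sum :: "(nat \<Rightarrow> nat \<Rightarrow> real) \<Rightarrow> real" where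
  "grid_sum F = (\<Sum>n<2^m. \<Sum>j<2^(m+2). F n j)"

definition empty_box :: "nat \<Rightarrow> nat \<Rightarrow> nat \<Rightarrow> bool" where
  "empty_box p b s \<longleftrightarrow> (\<forall>i<2^m. \<not> (i div 2^p = b \<and> c i div 2^(m+1-p) = s))"

definition box_sign :: "nat \<Rightarrow> nat \<Rightarrow> nat \<Rightarrow> real" where
  "box_sign p n j = (if empty_box p (n div 2^p) (j div 2^(m+1-p)) then -1 else 0)"

definition r_fun :: "nat \<Rightarrow> nat \<Rightarrow> nat \<Rightarrow> real" where
  "r_fun p n j = box_sign p n j * dyadic_haar (p-1) n * dyadic_haar (m-p) j"

definition riesz :: "nat \<Rightarrow> nat \<Rightarrow> nat \<Rightarrow> real" where
  "riesz k n j = (\<Prod>p\<in>{1..k}. 1 + r_fun p n j / 4)"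

definition riesz_tail :: "nat \<Rightarrow> nat \<Rightarrow> nat \<Rightarrow> nat \<Rightarrow> real" where
  "riesz_tail a k n j = (\<Prod>p\<in>{a<..k}. 1 + r_fun p n j / 4)"

lemma grid_sum_add: "grid_sum (\<lambda>n j. F n j + G n j) = grid_sum F + grid_sum G"
  unfolding grid_sum_def by (simp add: sum.distrib)

lemma grid_sum_cmult: "grid_sum (\<lambda>n j. r * F n j) = r * grid_sum F"
  unfolding grid_sum_def by (simp add: sum_distrib_left)

lemma grid_sum_sum: "finite A \<Longrightarrow> grid_sum (\<lambda>n j. \<Sum>a\<in>A. F a n j) = (\<Sum>a\<in>A. grid_sum (F a))"
  unfolding grid_sum_def by (subst sum.swap, rule sum.cong[OF refl], rule sum.swap)

lemma grid_sum_const: "grid_sum (\<lambda>n j. r) = 2^m * 2^(m+2) * r"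
  unfolding grid_sum_def by simp

lemma abs_r_fun_le: "\<bar>r_fun p n j\<bar> \<le> 1"
  unfolding r_fun_def box_sign_def by (simp add: abs_mult)

lemma riesz_factor_bounds: "0 \<le> 1 + r_fun p n j / 4" "\<bar>1 + r_fun p n j / 4\<bar> \<le> 5/4"
  using abs_r_fun_le[of p n j] by (simp_all add: abs_le_iff)

lemma riesz_nonneg: "0 \<le> riesz k n j"
  unfolding riesz_def by (intro prod_nonneg riesz_factor_bounds)

lemma abs_riesz_tail_le: "\<bar>riesz_tail a k n j\<bar> \<le> (5/4)^(k-a)"
proof -
  have "\<bar>riesz_tail a k n j\<bar> = (\<Prod>p\<in>{a<..k}. \<bar>1 + r_fun p n j / 4\<bar>)"
    unfolding riesz_tail_def by (simp add: abs_prod)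
  also have "\<dots> \<le> (\<Prod>p\<in>{a<..k}. 5/4)"
    by (rule prod_mono, intro conjI abs_ge_zero riesz_factor_bounds(2))
  finally show ?thesis by simp
qed

lemma riesz_Suc: "riesz (Suc k) n j = riesz k n j * (1 + r_fun (Suc k) n j / 4)"
  unfolding riesz_def by (subst atLeastAtMostSuc_conv) (simp_all add: mult.commute)

lemma dyadic_const_box_sign: "dyadic_const p (m+1-p) (box_sign p)"
  unfolding box_sign_def by (rule dyadic_constI) simp

lemma dyadic_const_r_fun:
  assumes "1 \<le> p" "p \<le> m"
  shows "dyadic_const (p-1) (m-p) (r_fun p)"
proof -
  have "dyadic_const (p-1) (m-p) (box_sign p)"
    by (rule dyadic_const_mono[OF dyadic_const_box_sign]) (use assms in auto)
  then show ?thesis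
    unfolding r_fun_def by (intro dyadic_const_mult dyadic_const_haar_row dyadic_const_haar_col)
qed

lemma dyadic_const_riesz_factors:
  assumes "\<And>p. p \<in> P \<Longrightarrow> e < p \<and> p < k" "k \<le> m"
  shows "dyadic_const e (m+1-k) (\<lambda>n j. \<Prod>p\<in>P. 1 + r_fun p n j / 4)"
proof (rule dyadic_const_prod, rule dyadic_const_comp[where \<phi>="\<lambda>x. 1 + x / 4"])
  fix p assume "p \<in> P"
  then have p: "e < p" "p < k" using assms(1) by auto
  have "dyadic_const (p-1) (m-p) (r_fun p)" by (rule dyadic_const_r_fun) (use p assms(2) in auto)
  then show "dyadic_const e (m+1-k) (r_fun p)" by (rule dyadic_const_mono) (use p in auto)
qed

lemma grid_sum_disc_haar_empty_boxes:
  assumes a: "1 \<le> a" "a \<le> k" and km: "k \<le> m" and const: "dyadic_const a (m+1-k) g"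
    and empty: "\<And>n j i. g n j \<noteq> 0 \<Longrightarrow> i < 2^m \<Longrightarrow>
                  \<not> (i div 2^a = n div 2^a \<and> c i div 2^(m+1-k) = j div 2^(m+1-k))"
  shows "grid_sum (\<lambda>n j. local_disc n j * g n j * dyadic_haar (a-1) n * dyadic_haar (m-k) j)
     = - (((2::real)^(a-1) * 2^(m-k))^2 / 2^(m+2))
         * (\<Sum>b<2^(m-a). \<Sum>s<2^(k+1). g (b * 2^a) (s * 2^(m+1-k)))"
proof -
  have t: "2 * (2::nat)^(a-1) = 2^a" using a(1) by (cases a) auto
  have s: "2 * (2::nat)^(m-k) = 2^(m+1-k)" using km by (simp add: Suc_diff_le)
  have N: "(2::nat)^m = 2^(m-a) * (2 * 2^(a-1))" unfolding t using a km by (simp flip: power_add)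
  have G: "(2::nat)^(m+2) = 2^(k+1) * (2 * 2^(m-k))" unfolding s using km by (simp flip: power_add)
  have "grid_sum (\<lambda>n j. local_disc n j * g n j * dyadic_haar (a-1) n * dyadic_haar (m-k) j)
      = (\<Sum>n<2^m. \<Sum>j<2^(k+1) * (2 * 2^(m-k)).
          (real (card {i. i < n \<and> c i < j}) - real n * real j / 2^(m+2)) * g n j
            * haar (2^(a-1)) (n mod (2 * 2^(a-1))) * haar (2^(m-k)) (j mod (2 * 2^(m-k))))"
    unfolding grid_sum_def local_disc_def dyadic_haar_def G ..
  also have "\<dots> = - ((real (2^(a-1)) * real (2^(m-k)))^2 / 2^(m+2))
      * (\<Sum>b<2^(m-a). \<Sum>s<2^(k+1). g (b * (2 * 2^(a-1))) (s * (2 * 2^(m-k))))"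
  proof (rule sum_disc_haar_empty_boxes[OF N])
    fix n n' j j' :: nat
    assume "n div (2 * 2^(a-1)) = n' div (2 * 2^(a-1))" "j div (2 * 2^(m-k)) = j' div (2 * 2^(m-k))"
    then show "g n j = g n' j'" unfolding t s by (rule dyadic_constD[OF const])
  next
    fix n j i :: nat
    assume "g n j \<noteq> 0" "i < 2^m"
    then show "\<not> (i div (2 * 2^(a-1)) = n div (2 * 2^(a-1)) \<and> c i div (2 * 2^(m-k)) = j div (2 * 2^(m-k)))"
      unfolding t s by (rule empty)
  qed simp_all
  finally show ?thesis unfolding t s by simp
qed

lemma sum_box_sign_eq:
  "(\<Sum>b<B. \<Sum>s<S. box_sign k (b * 2^k) (s * 2^(m+1-k)))
     = - real (card {bs \<in> {..<B} \<times> {..<S}. empty_box k (fst bs) (snd bs)})"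
proof -
  have "(\<Sum>b<B. \<Sum>s<S. box_sign k (b * 2^k) (s * 2^(m+1-k)))
      = (\<Sum>bs\<in>{..<B} \<times> {..<S}. if empty_box k (fst bs) (snd bs) then -1 else 0)"
    by (simp add: box_sign_def sum.cartesian_product case_prod_beta)
  also have "\<dots> = (\<Sum>bs\<in>{bs \<in> {..<B} \<times> {..<S}. empty_box k (fst bs) (snd bs)}. -1)"
    by (rule sum.inter_filter[symmetric]) simp
  finally show ?thesis by simp
qed

lemma card_empty_boxes:
  assumes "k \<le> m"
  shows "2^m \<le> card {bs \<in> {..<2^(m-k)} \<times> {..<2^(k+1)}. empty_box k (fst bs) (snd bs)}"
proof -
  let ?boxes = "{..<(2::nat)^(m-k)} \<times> {..<(2::nat)^(k+1)}"
  let ?empty = "{bs \<in> ?boxes. empty_box k (fst bs) (snd bs)}"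
    and ?full = "{bs \<in> ?boxes. \<not> empty_box k (fst bs) (snd bs)}"
  have "?full \<subseteq> (\<lambda>i. (i div 2^k, c i div 2^(m+1-k))) ` {..<2^m}"
  proof
    fix bs assume "bs \<in> ?full"
    then obtain i where "i < 2^m" "i div 2^k = fst bs" "c i div 2^(m+1-k) = snd bs"
      unfolding empty_box_def by blast
    then show "bs \<in> (\<lambda>i. (i div 2^k, c i div 2^(m+1-k))) ` {..<2^m}"
      by (intro image_eqI[of _ _ i]) auto
  qed
  then have "card ?full \<le> 2^m"
    using surj_card_le[of "{..<2^m}"] by fastforce
  moreover have "card ?empty + card ?full = card ?boxes"
  proof -
    have "card ?empty + card ?full = card (?empty \<union> ?full)"
      by (rule card_Un_disjoint[symmetric]) auto
    also have "?empty \<union> ?full = ?boxes" by auto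
    finally show ?thesis .
  qed
  moreover have "card ?boxes = 2 * 2^m"
  proof -
    have "(2::nat)^(m-k) * 2^(k+1) = 2 * 2^m" using assms by (simp flip: power_add)
    then show ?thesis by (simp only: card_cartesian_product card_lessThan)
  qed
  ultimately show ?thesis by linarith
qed

lemma grid_sum_disc_r_fun:
  assumes k: "1 \<le> k" "k \<le> m"
  shows "2^(2*m) / 16 \<le> grid_sum (\<lambda>n j. local_disc n j * r_fun k n j)"
proof -
  let ?w = "((2::real)^(k-1) * 2^(m-k))^2 / 2^(m+2)"
    and ?empty = "card {bs \<in> {..<2^(m-k)} \<times> {..<2^(k+1)}. empty_box k (fst bs) (snd bs)}"
  have "grid_sum (\<lambda>n j. local_disc n j * r_fun k n j)
      = grid_sum (\<lambda>n j. local_disc n j * box_sign k n j * dyadic_haar (k-1) n * dyadic_haar (m-k) j)"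
    unfolding r_fun_def by (simp only: mult.assoc)
  also have "\<dots> = - ?w * (\<Sum>b<2^(m-k). \<Sum>s<2^(k+1). box_sign k (b * 2^k) (s * 2^(m+1-k)))"
  proof (rule grid_sum_disc_haar_empty_boxes[OF k(1) order_refl k(2) dyadic_const_box_sign])
    fix n j i :: nat
    assume "box_sign k n j \<noteq> 0" "i < 2^m"
    then show "\<not> (i div 2^k = n div 2^k \<and> c i div 2^(m+1-k) = j div 2^(m+1-k))"
      unfolding box_sign_def empty_box_def by (auto split: if_splits)
  qed
  also have "\<dots> = ?w * real ?empty" by (simp only: sum_box_sign_eq mult_minus_left mult_minus_right minus_minus)
  finally have eq: "grid_sum (\<lambda>n j. local_disc n j * r_fun k n j) = ?w * real ?empty" .
  have "real (2^m) \<le> real ?empty" by (simp only: of_nat_le_iff card_empty_boxes[OF k(2)])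
  then have "?w * 2^m \<le> ?w * real ?empty" by (intro mult_left_mono) simp_all
  moreover have "?w * 2^m = 2^(2*m) / 16"
  proof -
    have boxes: "(2::real)^(m-k) * 2^(k+1) = 2 * 2^m" using k(2) by (simp flip: power_add)
    have "?w * (2^(m-k) * 2^(k+1)) = 2^(2*m) / 8"
      using dyadic_weight_eq[OF k(1) order_refl k(2)] by (simp only: diff_self_eq_0 power_0 mult_1_right)
    then have "?w * (2 * 2^m) = 2^(2*m) / 8" by (simp only: boxes)
    then show ?thesis by (simp add: algebra_simps)
  qed
  ultimately show ?thesis unfolding eq by simp
qed

definition cross_weight :: "nat \<Rightarrow> nat \<Rightarrow> nat \<Rightarrow> nat \<Rightarrow> real" where
  "cross_weight a k n j = box_sign a n j * dyadic_haar (m-a) j * riesz_tail a (k-1) n j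
      * box_sign k n j * dyadic_haar (k-1) n"

lemma abs_cross_weight_le: "\<bar>cross_weight a k n j\<bar> \<le> (5/4)^(k-1-a)"
proof -
  let ?signs = "box_sign a n j * dyadic_haar (m-a) j * box_sign k n j * dyadic_haar (k-1) n"
  have signs: "\<bar>?signs\<bar> \<le> 1"
    unfolding box_sign_def by (simp add: abs_mult)
  have "\<bar>cross_weight a k n j\<bar> = \<bar>riesz_tail a (k-1) n j\<bar> * \<bar>?signs\<bar>"
    unfolding cross_weight_def by (simp only: abs_mult[symmetric]) (simp only: mult_ac)
  also have "\<dots> \<le> \<bar>riesz_tail a (k-1) n j\<bar>" by (rule mult_left_le[OF signs abs_ge_zero])
  also have "\<dots> \<le> (5/4)^(k-1-a)" by (rule abs_riesz_tail_le)
  finally show ?thesis .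
qed

lemma grid_sum_disc_cross_eq:
  assumes a: "1 \<le> a" "a < k" and km: "k \<le> m"
  shows "grid_sum (\<lambda>n j. local_disc n j * (r_fun a n j * riesz_tail a (k-1) n j * r_fun k n j))
     = - (((2::real)^(a-1) * 2^(m-k))^2 / 2^(m+2))
         * (\<Sum>b<2^(m-a). \<Sum>s<2^(k+1). cross_weight a k (b * 2^a) (s * 2^(m+1-k)))"
proof -
  have "grid_sum (\<lambda>n j. local_disc n j * (r_fun a n j * riesz_tail a (k-1) n j * r_fun k n j))
      = grid_sum (\<lambda>n j. local_disc n j * cross_weight a k n j * dyadic_haar (a-1) n * dyadic_haar (m-k) j)"
    unfolding r_fun_def cross_weight_def by (simp only: mult_ac)
  also have "\<dots> = - (((2::real)^(a-1) * 2^(m-k))^2 / 2^(m+2))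
         * (\<Sum>b<2^(m-a). \<Sum>s<2^(k+1). cross_weight a k (b * 2^a) (s * 2^(m+1-k)))"
  proof (rule grid_sum_disc_haar_empty_boxes[OF a(1) _ km])
    show "a \<le> k" using a by simp
    have d1: "dyadic_const a (m+1-k) (box_sign a)"
      by (rule dyadic_const_mono[OF dyadic_const_box_sign]) (use a in auto)
    have d2: "dyadic_const a (m+1-k) (\<lambda>n j. dyadic_haar (m-a) j)"
      by (rule dyadic_const_mono[OF dyadic_const_haar_col]) (use a km in auto)
    have d3: "dyadic_const a (m+1-k) (riesz_tail a (k-1))"
      unfolding riesz_tail_def by (rule dyadic_const_riesz_factors) (use km in auto)
    have d4: "dyadic_const a (m+1-k) (box_sign k)"
      by (rule dyadic_const_mono[OF dyadic_const_box_sign]) (use a in auto)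
    have d5: "dyadic_const a (m+1-k) (\<lambda>n j. dyadic_haar (k-1) n)"
      by (rule dyadic_const_mono[OF dyadic_const_haar_row]) (use a in auto)
    show "dyadic_const a (m+1-k) (cross_weight a k)"
      unfolding cross_weight_def
      by (rule dyadic_const_mult[OF dyadic_const_mult[OF dyadic_const_mult[OF dyadic_const_mult[OF d1 d2] d3] d4] d5])
  next
    fix n j i :: nat
    assume "cross_weight a k n j \<noteq> 0" and i: "i < 2^m"
    then have "box_sign a n j \<noteq> 0" unfolding cross_weight_def by auto
    then have empty: "empty_box a (n div 2^a) (j div 2^(m+1-a))"
      unfolding box_sign_def by (auto split: if_splits)
    show "\<not> (i div 2^a = n div 2^a \<and> c i div 2^(m+1-k) = j div 2^(m+1-k))"
    proof
      assume h: "i div 2^a = n div 2^a \<and> c i div 2^(m+1-k) = j div 2^(m+1-k)"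
      have "c i div 2^(m+1-a) = j div 2^(m+1-a)"
        by (rule div_eq_imp_div_power_eq[where a="m+1-k"]) (use h a in auto)
      then show False using empty i h unfolding empty_box_def by blast
    qed
  qed
  finally show ?thesis .
qed

lemma grid_sum_disc_cross:
  assumes a: "1 \<le> a" "a < k" and km: "k \<le> m"
  shows "\<bar>grid_sum (\<lambda>n j. local_disc n j * (r_fun a n j * riesz_tail a (k-1) n j * r_fun k n j))\<bar>
     \<le> 2^(2*m) / 8 * (1/2)^(k-a) * (5/4)^(k-1-a)"
proof -
  let ?w = "((2::real)^(a-1) * 2^(m-k))^2 / 2^(m+2)"
    and ?sum = "\<Sum>b<(2::nat)^(m-a). \<Sum>s<(2::nat)^(k+1). cross_weight a k (b * 2^a) (s * 2^(m+1-k))"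
  have "\<bar>?sum\<bar> \<le> (\<Sum>b<(2::nat)^(m-a). \<Sum>s<(2::nat)^(k+1). (5/4)^(k-1-a))"
    by (rule order_trans[OF sum_abs], rule sum_mono, rule order_trans[OF sum_abs], rule sum_mono,
        rule abs_cross_weight_le)
  also have "\<dots> = 2^(m-a) * 2^(k+1) * (5/4)^(k-1-a)" by simp
  finally have sum_bound: "\<bar>?sum\<bar> \<le> 2^(m-a) * 2^(k+1) * (5/4)^(k-1-a)" .
  have w: "0 \<le> ?w" by simp
  have "\<bar>grid_sum (\<lambda>n j. local_disc n j * (r_fun a n j * riesz_tail a (k-1) n j * r_fun k n j))\<bar>
      = ?w * \<bar>?sum\<bar>"
    by (simp only: grid_sum_disc_cross_eq[OF a km] abs_mult abs_minus_cancel abs_of_nonneg[OF w])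
  also have "\<dots> \<le> ?w * (2^(m-a) * 2^(k+1) * (5/4)^(k-1-a))" by (rule mult_left_mono[OF sum_bound w])
  also have "\<dots> = (?w * (2^(m-a) * 2^(k+1))) * (5/4)^(k-1-a)" by (simp only: mult_ac)
  also have "\<dots> = 2^(2*m) / 8 * (1/2)^(k-a) * (5/4)^(k-1-a)"
    using a km by (subst dyadic_weight_eq) simp_all
  finally show ?thesis .
qed

(* riesz (k-1), box_sign k and dyadic_haar (k-1) are constant on the j-blocks of length
   2^(m+1-k), on each of which dyadic_haar (m-k) sums to zero. *)
lemma grid_sum_riesz_r_fun:
  assumes k: "1 \<le> k" "k \<le> m"
  shows "grid_sum (\<lambda>n j. riesz (k-1) n j * r_fun k n j) = 0"
proof -
  define u where "u n j = riesz (k-1) n j * box_sign k n j * dyadic_haar (k-1) n" for n j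
  have d1: "dyadic_const 0 (m+1-k) (riesz (k-1))"
    unfolding riesz_def by (rule dyadic_const_riesz_factors) (use k in auto)
  have d2: "dyadic_const 0 (m+1-k) (box_sign k)"
    by (rule dyadic_const_mono[OF dyadic_const_box_sign]) auto
  have d3: "dyadic_const 0 (m+1-k) (\<lambda>n j. dyadic_haar (k-1) n)"
    by (rule dyadic_const_mono[OF dyadic_const_haar_row]) auto
  have u: "dyadic_const 0 (m+1-k) u"
    unfolding u_def by (rule dyadic_const_mult[OF dyadic_const_mult[OF d1 d2] d3])
  have s: "2 * (2::nat)^(m-k) = 2^(m+1-k)" using k by (simp add: Suc_diff_le)
  have G: "(2::nat)^(m+2) = 2^(k+1) * (2 * 2^(m-k))" unfolding s using k by (simp flip: power_add)
  have "grid_sum (\<lambda>n j. riesz (k-1) n j * r_fun k n j)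
      = (\<Sum>n<2^m. \<Sum>j<2^(k+1) * (2 * 2^(m-k)). u n j * dyadic_haar (m-k) j)"
    unfolding grid_sum_def G u_def r_fun_def by (simp only: mult.assoc)
  also have "\<dots> = (\<Sum>n<(2::nat)^m. 0)"
  proof (rule sum.cong[OF refl], rule sum_dyadic_haar_blocks)
    fix n j j' :: nat
    assume "j div (2 * 2^(m-k)) = j' div (2 * 2^(m-k))"
    then show "u n j = u n j'" unfolding s by (intro dyadic_constD[OF u]) simp_all
  qed
  finally show ?thesis by simp
qed

lemma grid_sum_riesz: "k \<le> m \<Longrightarrow> grid_sum (riesz k) = 2^m * 2^(m+2)"
proof (induction k)
  case 0
  then show ?case unfolding riesz_def by (simp add: grid_sum_const)
next
  case (Suc k)
  have "grid_sum (riesz (Suc k))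
      = grid_sum (riesz k) + 1/4 * grid_sum (\<lambda>n j. riesz (Suc k - 1) n j * r_fun (Suc k) n j)"
    unfolding riesz_Suc diff_Suc_1 grid_sum_cmult[symmetric] grid_sum_add[symmetric]
    by (simp add: algebra_simps)
  also have "grid_sum (\<lambda>n j. riesz (Suc k - 1) n j * r_fun (Suc k) n j) = 0"
    by (rule grid_sum_riesz_r_fun) (use Suc.prems in auto)
  finally show ?case using Suc by simp
qed

lemma grid_sum_disc_riesz_r_fun:
  assumes k: "1 \<le> k" "k \<le> m"
  shows "2^(2*m) / 48 \<le> grid_sum (\<lambda>n j. local_disc n j * (riesz (k-1) n j * r_fun k n j))"
proof -
  let ?cross = "\<lambda>a. grid_sum (\<lambda>n j. local_disc n j * (r_fun a n j * riesz_tail a (k-1) n j * r_fun k n j))"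
  have "riesz (k-1) n j = 1 + (\<Sum>a\<in>{1..k-1}. r_fun a n j / 4 * riesz_tail a (k-1) n j)" for n j
    unfolding riesz_def riesz_tail_def by (rule prod_one_plus_expand)
  then have "grid_sum (\<lambda>n j. local_disc n j * (riesz (k-1) n j * r_fun k n j))
      = grid_sum (\<lambda>n j. local_disc n j * r_fun k n j
          + (\<Sum>a\<in>{1..k-1}. 1/4 * (local_disc n j * (r_fun a n j * riesz_tail a (k-1) n j * r_fun k n j))))"
    by (simp add: algebra_simps sum_distrib_left sum_distrib_right)
  also have "\<dots> = grid_sum (\<lambda>n j. local_disc n j * r_fun k n j) + (\<Sum>a\<in>{1..k-1}. 1/4 * ?cross a)"
    by (simp only: grid_sum_add grid_sum_sum[OF finite_atLeastAtMost] grid_sum_cmult)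
  finally have eq: "grid_sum (\<lambda>n j. local_disc n j * (riesz (k-1) n j * r_fun k n j))
      = grid_sum (\<lambda>n j. local_disc n j * r_fun k n j) + (\<Sum>a\<in>{1..k-1}. 1/4 * ?cross a)" .
  have "- (2^(2*m) / 32 * ((1/2::real)^(k-a) * (5/4)^(k-1-a))) \<le> 1/4 * ?cross a"
    if "a \<in> {1..k-1}" for a
  proof -
    have "\<bar>?cross a\<bar> \<le> 2^(2*m) / 8 * (1/2)^(k-a) * (5/4)^(k-1-a)"
      by (rule grid_sum_disc_cross) (use that k in auto)
    then show ?thesis by (simp only: abs_le_iff) linarith
  qed
  then have "- (2^(2*m) / 32 * (\<Sum>a\<in>{1..k-1}. (1/2::real)^(k-a) * (5/4)^(k-1-a)))
      \<le> (\<Sum>a\<in>{1..k-1}. 1/4 * ?cross a)"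
    unfolding sum_distrib_left sum_negf[symmetric] by (rule sum_mono)
  moreover have "(\<Sum>a\<in>{1..k-1}. (1/2::real)^(k-a) * (5/4)^(k-1-a)) \<le> 4/3"
    using sum_geometric_cross_bound[of "k-1"] k by simp
  then have "2^(2*m) / 32 * (\<Sum>a\<in>{1..k-1}. (1/2::real)^(k-a) * (5/4)^(k-1-a)) \<le> 2^(2*m) / 32 * (4/3)"
    by (intro mult_left_mono) simp_all
  moreover have "2^(2*m) / 16 \<le> grid_sum (\<lambda>n j. local_disc n j * r_fun k n j)"
    by (rule grid_sum_disc_r_fun[OF k])
  ultimately show ?thesis unfolding eq by linarith
qed

lemma grid_sum_disc_riesz:
  "k \<le> m \<Longrightarrow> real k * 2^(2*m) / 192 \<le> grid_sum (\<lambda>n j. local_disc n j * (riesz k n j - 1))"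
proof (induction k)
  case 0
  then show ?case unfolding riesz_def by (simp add: grid_sum_def)
next
  case (Suc k)
  have "grid_sum (\<lambda>n j. local_disc n j * (riesz (Suc k) n j - 1))
      = grid_sum (\<lambda>n j. local_disc n j * (riesz k n j - 1))
        + 1/4 * grid_sum (\<lambda>n j. local_disc n j * (riesz (Suc k - 1) n j * r_fun (Suc k) n j))"
    unfolding riesz_Suc diff_Suc_1 grid_sum_cmult[symmetric] grid_sum_add[symmetric]
    by (simp add: algebra_simps)
  moreover have "2^(2*m) / 48 \<le> grid_sum (\<lambda>n j. local_disc n j * (riesz (Suc k - 1) n j * r_fun (Suc k) n j))"
    by (rule grid_sum_disc_riesz_r_fun) (use Suc.prems in auto)
  ultimately show ?case using Suc by (simp add: algebra_simps)
qed

lemma grid_sum_disc_riesz_le: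
  assumes "\<And>n j. n < 2^m \<Longrightarrow> j < 2^(m+2) \<Longrightarrow> \<bar>local_disc n j\<bar> \<le> B"
  shows "grid_sum (\<lambda>n j. local_disc n j * (riesz m n j - 1)) \<le> B * (8 * 2^(2*m))"
proof -
  have "grid_sum (\<lambda>n j. local_disc n j * (riesz m n j - 1)) \<le> grid_sum (\<lambda>n j. B * (riesz m n j + 1))"
    unfolding grid_sum_def
  proof (intro sum_mono)
    fix n j :: nat assume "n \<in> {..<2^m}" "j \<in> {..<2^(m+2)}"
    then have "\<bar>local_disc n j\<bar> \<le> B" by (simp add: assms)
    moreover have "\<bar>riesz m n j - 1\<bar> \<le> riesz m n j + 1" using riesz_nonneg[of m n j] by simp
    ultimately have "\<bar>local_disc n j\<bar> * \<bar>riesz m n j - 1\<bar> \<le> B * (riesz m n j + 1)"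
      by (intro mult_mono) simp_all
    then show "local_disc n j * (riesz m n j - 1) \<le> B * (riesz m n j + 1)"
      by (metis abs_ge_self abs_mult order_trans)
  qed
  also have "\<dots> = B * (grid_sum (riesz m) + grid_sum (\<lambda>n j. 1))"
    by (simp only: grid_sum_cmult grid_sum_add)
  also have "\<dots> = B * (8 * 2^(2*m))"
  proof -
    have "(2::real)^(2*m) = 2^m * 2^m" by (simp flip: power_add)
    then show ?thesis by (simp add: grid_sum_riesz grid_sum_const power_add)
  qed
  finally show ?thesis .
qed

(* The Riesz product is nonnegative with the total mass of the grid, so its correlation with
   local_disc, which grows linearly in m, is at most 8 \<cdot> 2^(2m) \<cdot> max |local_disc|. *)
lemma exists_large_local_disc: "\<exists>n<2^m. \<exists>j<2^(m+2). real m / 2000 \<le> \<bar>local_disc n j\<bar>"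
proof (rule ccontr)
  assume neg: "\<not> ?thesis"
  then have small: "\<bar>local_disc n j\<bar> \<le> real m / 2000" if "n < 2^m" "j < 2^(m+2)" for n j
    using that by fastforce
  from neg have "\<not> real m / 2000 \<le> \<bar>local_disc 0 0\<bar>" by force
  then have "0 < m" by (simp add: local_disc_def)
  have "real m * 2^(2*m) / 192 \<le> grid_sum (\<lambda>n j. local_disc n j * (riesz m n j - 1))"
    by (rule grid_sum_disc_riesz) simp
  also have "\<dots> \<le> real m / 2000 * (8 * 2^(2*m))"
    by (rule grid_sum_disc_riesz_le) (rule small)
  finally show False using \<open>0 < m\<close> by simp
qed

end

lemma discrete_schmidt:
  fixes c :: "nat \<Rightarrow> nat"
  shows "\<exists>n<2^m. \<exists>j<2^(m+2).
           real m / 2000 \<le> \<bar>real (card {i. i < n \<and> c i < j}) - real n * real j / 2^(m+2)\<bar>"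
  using dyadic_grid.exists_large_local_disc[of m c] unfolding dyadic_grid.local_disc_def .

section \<open>The regular grid and the van der Corput sequence\<close>

(* Binary digit reversal: vdc (\<Sum>i. d_i 2^i) = \<Sum>i. d_i 2^-(i+1). *)
fun vdc :: "nat \<Rightarrow> real" where
  "vdc n = (if n = 0 then 0 else vdc (n div 2) / 2 + (if odd n then 1/2 else 0))"

declare vdc.simps [simp del]

lemma vdc_0 [simp]: "vdc 0 = 0"
  by (simp add: vdc.simps)

lemma vdc_even: "vdc (2*i) = vdc i / 2"
  by (cases "i = 0") (simp_all add: vdc.simps[of "2*i"])

lemma vdc_odd: "vdc (2*i + 1) = vdc i / 2 + 1/2"
  using vdc.simps[of "2*i + 1"] by simp

lemma vdc_range: "0 \<le> vdc n \<and> vdc n < 1"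
proof (induction n rule: less_induct)
  case (less n)
  show ?case
  proof (cases "n = 0")
    case False
    then have "0 \<le> vdc (n div 2) \<and> vdc (n div 2) < 1" by (intro less) simp
    with False show ?thesis by (simp add: vdc.simps[of n])
  qed simp
qed

definition vdc_count :: "nat \<Rightarrow> real \<Rightarrow> real" where
  "vdc_count N t = (\<Sum>k<N. if vdc k < t then 1 else 0)"

lemma vdc_count_eq_card: "vdc_count N t = real (card {k. k < N \<and> vdc k < t})"
proof -
  have "{k\<in>{..<N}. vdc k < t} = {k. k < N \<and> vdc k < t}" by auto
  then show ?thesis
    unfolding vdc_count_def using sum.inter_filter[of "{..<N}" "\<lambda>_. 1::real" "\<lambda>k. vdc k < t"] by simp
qed

lemma vdc_count_nonpos: "t \<le> 0 \<Longrightarrow> vdc_count N t = 0"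
  unfolding vdc_count_def using vdc_range by (intro sum.neutral) (auto simp: not_less intro: order_trans)

lemma vdc_count_ge_1: "1 \<le> t \<Longrightarrow> vdc_count N t = N"
proof -
  assume "1 \<le> t"
  then have "vdc_count N t = (\<Sum>k<N. 1)"
    unfolding vdc_count_def using vdc_range by (intro sum.cong refl) (auto intro: less_le_trans)
  then show ?thesis by simp
qed

lemma vdc_count_split:
  assumes "r \<le> 1"
  shows "vdc_count (2*M + r) t = vdc_count (M + r) (2*t) + vdc_count M (2*t - 1)"
proof -
  have "vdc_count (2*M) t = vdc_count M (2*t) + vdc_count M (2*t - 1)"
  proof -
    have "vdc_count (2*M) t = (\<Sum>i<M. if vdc (2*i) < t then 1 else 0) + (\<Sum>i<M. if vdc (2*i + 1) < t then 1 else 0)"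
      unfolding vdc_count_def by (induction M) (simp_all add: algebra_simps)
    then show ?thesis
      unfolding vdc_count_def vdc_even vdc_odd by (auto intro!: arg_cong2[where f="(+)"] sum.cong)
  qed
  moreover have "vdc_count (2*M + 1) t = vdc_count (2*M) t + (if vdc M < 2*t then 1 else 0)"
    unfolding vdc_count_def by (simp add: vdc_even)
  moreover have "vdc_count (M + 1) (2*t) = vdc_count M (2*t) + (if vdc M < 2*t then 1 else 0)"
    unfolding vdc_count_def by simp
  ultimately show ?thesis using assms by (cases r) auto
qed

lemma abs_add_le_half_step:
  fixes a b :: real
  assumes "\<bar>a\<bar> \<le> 1 + real k / 2" "\<bar>b\<bar> \<le> 1/2"
  shows "\<bar>a + b\<bar> \<le> 1 + real (Suc k) / 2"
  using abs_triangle_ineq[of a b] assms by (simp add: add_divide_distrib)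

lemma vdc_count_discrepancy:
  "N \<le> 2^k \<Longrightarrow> t \<in> {0..1} \<Longrightarrow> \<bar>vdc_count N t - real N * t\<bar> \<le> 1 + real k / 2"
proof (induction k arbitrary: N t)
  case 0
  then have "N = 0 \<or> N = 1" by auto
  then show ?case using 0 by (auto simp: vdc_count_def)
next
  case (Suc k)
  define M r where "M = N div 2" and "r = N mod 2"
  have N: "N = 2*M + r" and r: "r \<le> 1" unfolding M_def r_def by simp_all
  have M: "M + r \<le> 2^k" "M \<le> 2^k" using Suc.prems(1) unfolding N using r by simp_all
  show ?case
  proof (cases "t \<le> 1/2")
    case True
    have "vdc_count N t - real N * t = (vdc_count (M + r) (2*t) - real (M + r) * (2*t)) + real r * t"
      unfolding N vdc_count_split[OF r] using True by (simp add: vdc_count_nonpos algebra_simps)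
    also have "\<bar>\<dots>\<bar> \<le> 1 + real (Suc k) / 2"
    proof (rule abs_add_le_half_step)
      show "\<bar>vdc_count (M + r) (2*t) - real (M + r) * (2*t)\<bar> \<le> 1 + real k / 2"
        by (rule Suc.IH) (use M True Suc.prems(2) in auto)
      show "\<bar>real r * t\<bar> \<le> 1/2" using r True Suc.prems(2) by (cases r) auto
    qed
    finally show ?thesis .
  next
    case False
    have "vdc_count N t - real N * t = (vdc_count M (2*t - 1) - real M * (2*t - 1)) + real r * (1 - t)"
      unfolding N vdc_count_split[OF r] using False by (simp add: vdc_count_ge_1 algebra_simps)
    also have "\<bar>\<dots>\<bar> \<le> 1 + real (Suc k) / 2"
    proof (rule abs_add_le_half_step)
      show "\<bar>vdc_count M (2*t - 1) - real M * (2*t - 1)\<bar> \<le> 1 + real k / 2"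
        by (rule Suc.IH) (use M False Suc.prems(2) in auto)
      show "\<bar>real r * (1 - t)\<bar> \<le> 1/2" using r False Suc.prems(2) by (cases r) auto
    qed
    finally show ?thesis .
  qed
qed

lemma card_shift_index:
  fixes N :: nat
  shows "card {i\<in>{1..N}. P (i - 1)} = card {k. k < N \<and> P k}"
proof -
  have "{i\<in>{1..N}. P (i - 1)} = Suc ` {k. k < N \<and> P k}"
  proof (intro equalityI subsetI)
    fix i assume "i \<in> {i\<in>{1..N}. P (i - 1)}"
    then have "i = Suc (i - 1)" "i - 1 \<in> {k. k < N \<and> P k}" by auto
    then show "i \<in> Suc ` {k. k < N \<and> P k}" by (metis imageI)
  qed auto
  then show ?thesis by (simp add: card_image)
qed

lemma exists_power_of_two_between:
  fixes N :: nat
  assumes "1 \<le> N"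
  shows "\<exists>k. N \<le> 2^k \<and> 2^k < 2*N"
proof -
  define k where "k = (LEAST k. N \<le> (2::nat)^k)"
  have "N \<le> 2^k" unfolding k_def by (rule LeastI[of _ N]) (simp add: less_imp_le)
  moreover have "2^k < 2*N"
  proof (cases k)
    case (Suc k')
    then have "\<not> N \<le> 2^k'" unfolding k_def using not_less_Least by (metis k_def lessI)
    then show ?thesis using Suc by simp
  qed (use assms in simp)
  ultimately show ?thesis by blast
qed

lemma vdc_count_log_bound:
  assumes N: "2 \<le> N" and t: "t \<in> {0..1}"
  shows "\<bar>vdc_count N t - real N * t\<bar> \<le> (2 / ln 2) * ln (real N)"
proof -
  obtain k where k: "N \<le> 2^k" "2^k < 2*N" using exists_power_of_two_between[of N] N by auto
  have "(2::real)^k < 2 * real N" using k(2) by (metis of_nat_less_iff of_nat_mult of_nat_numeral of_nat_power)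
  then have "ln ((2::real)^k) < ln (2 * real N)" using N by (subst ln_less_cancel_iff) auto
  then have "real k * ln 2 < ln 2 + ln (real N)" using N by (simp add: ln_realpow ln_mult)
  moreover have "ln 2 \<le> ln (real N)" using N by simp
  ultimately have "(1 + real k / 2) * ln 2 \<le> 2 * ln (real N)" by (simp add: algebra_simps)
  then have "1 + real k / 2 \<le> (2 / ln 2) * ln (real N)" by (simp add: field_simps)
  with vdc_count_discrepancy[OF k(1) t] show ?thesis by linarith
qed

lemma vdc_star_bound:
  assumes N: "2 \<le> N" and t: "t \<in> {0..1}"
  shows "\<bar>t - real (card {i\<in>{1..N}. vdc (i - 1) < t}) / real N\<bar> \<le> (2 / ln 2) * ln (real N) / real N"
proof -
  have "t - real (card {i\<in>{1..N}. vdc (i - 1) < t}) / real N = - (vdc_count N t - real N * t) / real N"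
    unfolding card_shift_index[of N "\<lambda>k. vdc k < t"] vdc_count_eq_card using N by (simp add: field_simps)
  then have "\<bar>t - real (card {i\<in>{1..N}. vdc (i - 1) < t}) / real N\<bar> = \<bar>vdc_count N t - real N * t\<bar> / real N"
    by (simp only: abs_divide abs_minus_cancel abs_of_nat)
  also have "\<dots> \<le> (2 / ln 2) * ln (real N) / real N"
    by (rule divide_right_mono[OF vdc_count_log_bound[OF N t]]) simp
  finally show ?thesis .
qed

lemma grid_star_bound:
  assumes N: "1 \<le> N" and t: "t \<in> {0..1}"
  shows "\<bar>t - real (card {i\<in>{1..N}. real (i - 1) / real N < t}) / real N\<bar> \<le> 1 / real N"
proof -
  define K where "K = nat \<lceil>real N * t\<rceil>"
  have N0: "0 < real N" using N by simp
  have K: "real K = real_of_int \<lceil>real N * t\<rceil>" unfolding K_def using t N0 by simp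
  have below_iff: "real (i - 1) / real N < t \<longleftrightarrow> i - 1 < K" for i :: nat
  proof -
    have "real (i - 1) / real N < t \<longleftrightarrow> real (i - 1) < real N * t"
      using N0 by (simp add: divide_less_eq mult.commute)
    also have "\<dots> \<longleftrightarrow> int (i - 1) < \<lceil>real N * t\<rceil>" by (simp add: less_ceiling_iff)
    finally show ?thesis unfolding K_def using t N0 by auto
  qed
  have "card {i\<in>{1..N}. real (i - 1) / real N < t} = card {k. k < N \<and> k < K}"
    unfolding below_iff by (rule card_shift_index)
  also have "{k. k < N \<and> k < K} = {..<K}"
  proof -
    have "real N * t \<le> real N" using t N0 by (simp add: mult_left_le)
    then have "K \<le> N" unfolding K_def by (simp add: ceiling_le nat_le_iff)
    then show ?thesis by auto
  qed
  finally have "card {i\<in>{1..N}. real (i - 1) / real N < t} = K" by simp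
  moreover have "\<bar>real N * t - real K\<bar> \<le> 1" using K by linarith
  ultimately show ?thesis using N0 by (simp add: field_simps abs_divide)
qed

section \<open>Star discrepancy with respect to a measure on [0,1]\<close>

lemma card_points_le: "card {i\<in>{1..N}. P i} \<le> N"
proof -
  have "card {i\<in>{1..N}. P i} \<le> card {1..N}" by (rule card_mono) auto
  then show ?thesis by simp
qed

lemma point_fraction_bounds:
  "0 \<le> real (card {i\<in>{1..N}. P i}) / real N" "real (card {i\<in>{1..N}. P i}) / real N \<le> 1"
  using card_points_le[of N P] by (auto simp: divide_le_eq_1)

lemma abs_diff_le_1_if_unit:
  fixes a b :: real
  shows "0 \<le> a \<Longrightarrow> a \<le> 1 \<Longrightarrow> 0 \<le> b \<Longrightarrow> b \<le> 1 \<Longrightarrow> \<bar>a - b\<bar> \<le> 1"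
  by linarith

locale unit_interval_prob =
  fixes M :: "real measure"
  assumes borel_prob: "borel_prob_on_unit M"
begin

sublocale prob_space M
  using borel_prob unfolding borel_prob_on_unit_def by simp

lemma sets_M: "sets M = sets borel"
  using borel_prob unfolding borel_prob_on_unit_def by simp

lemma measure_unit_interval: "measure M {0..1} = 1"
  using borel_prob unfolding borel_prob_on_unit_def by simp

lemma borel_in_sets_M: "A \<in> sets borel \<Longrightarrow> A \<in> sets M"
  using sets_M by simp

definition F :: "real \<Rightarrow> real" where
  "F b = measure M {0..<b}"

lemma F_mono: "b \<le> b' \<Longrightarrow> F b \<le> F b'"
  unfolding F_def by (rule finite_measure_mono) (auto intro: borel_in_sets_M)

lemma F_nonneg: "0 \<le> F b"
  unfolding F_def by (rule measure_nonneg)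

lemma F_le_1: "F b \<le> 1"
  unfolding F_def by (rule prob_le_1)

lemma F_nonpos_arg: "b \<le> 0 \<Longrightarrow> F b = 0"
  unfolding F_def by simp

lemma F_left_limit: "(\<lambda>n. F (b - 1 / Suc n)) \<longlonglongrightarrow> F b"
proof -
  have "(\<lambda>n. measure M {0..<b - 1 / Suc n}) \<longlonglongrightarrow> measure M (\<Union>n. {0..<b - 1 / Suc n})"
  proof (rule finite_Lim_measure_incseq)
    show "range (\<lambda>n. {0..<b - 1 / Suc n}) \<subseteq> sets M" by (auto intro: borel_in_sets_M)
    show "incseq (\<lambda>n. {0..<b - 1 / Suc n})"
      by (auto simp: incseq_def intro: order_less_le_trans frac_le)
  qed
  also have "(\<Union>n. {0..<b - 1 / Suc n}) = {0..<b}"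
  proof (intro equalityI subsetI)
    fix x assume "x \<in> {0..<b}"
    then obtain n where "1 / real (Suc n) < b - x" using nat_approx_posE[of "b - x"] by auto
    then have "x \<in> {0..<b - 1 / Suc n}" using \<open>x \<in> {0..<b}\<close> by simp
    then show "x \<in> (\<Union>n. {0..<b - 1 / Suc n})" by blast
  next
    fix x assume "x \<in> (\<Union>n. {0..<b - 1 / Suc n})"
    then obtain n where "0 \<le> x" "x < b - 1 / Suc n" by auto
    moreover have "0 < 1 / real (Suc n)" by simp
    ultimately show "x \<in> {0..<b}" by (simp only: atLeastLessThan_iff simp_thms)
  qed
  finally show ?thesis unfolding F_def .
qed

lemma F_right_limit: "0 \<le> b \<Longrightarrow> (\<lambda>n. F (b + 1 / Suc n)) \<longlonglongrightarrow> F b + measure M {b}"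
proof -
  assume b: "0 \<le> b"
  have "(\<lambda>n. measure M {0..<b + 1 / Suc n}) \<longlonglongrightarrow> measure M (\<Inter>n. {0..<b + 1 / Suc n})"
  proof (rule finite_Lim_measure_decseq)
    show "range (\<lambda>n. {0..<b + 1 / Suc n}) \<subseteq> sets M" by (auto intro: borel_in_sets_M)
    show "decseq (\<lambda>n. {0..<b + 1 / Suc n})"
      by (auto simp: decseq_def intro: order_less_le_trans frac_le)
  qed
  also have "(\<Inter>n. {0..<b + 1 / Suc n}) = {0..<b} \<union> {b}"
  proof (intro equalityI subsetI)
    fix x assume x: "x \<in> (\<Inter>n. {0..<b + 1 / Suc n})"
    have "x \<le> b"
    proof (rule ccontr)
      assume "\<not> x \<le> b"
      then obtain n where "1 / real (Suc n) < x - b" using nat_approx_posE[of "x - b"] by auto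
      moreover have "x \<in> {0..<b + 1 / Suc n}" using x by (rule INT_D) simp
      then have "x < b + 1 / Suc n" by simp
      ultimately show False by linarith
    qed
    with x show "x \<in> {0..<b} \<union> {b}" by auto
  next
    fix x assume x: "x \<in> {0..<b} \<union> {b}"
    have "x < b + 1 / Suc n" for n
    proof -
      have "0 < 1 / real (Suc n)" by simp
      moreover have "x \<le> b" using x by auto
      ultimately show ?thesis by linarith
    qed
    then show "x \<in> (\<Inter>n. {0..<b + 1 / Suc n})" using x b by auto
  qed
  also have "measure M ({0..<b} \<union> {b}) = F b + measure M {b}"
    unfolding F_def by (rule finite_measure_Union) (auto intro: borel_in_sets_M)
  finally show ?thesis unfolding F_def .
qed

lemma F_1: "F 1 = 1 - measure M {1}"
proof -
  have "measure M ({0..<1} \<union> {1}) = F 1 + measure M {1}"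
    unfolding F_def by (rule finite_measure_Union) (auto intro: borel_in_sets_M)
  moreover have "{0..<1} \<union> {1::real} = {0..1}" by auto
  ultimately show ?thesis using measure_unit_interval by simp
qed

lemma F_le_if_below:
  assumes "\<And>y. y < b \<Longrightarrow> F y \<le> t"
  shows "F b \<le> t"
  using assms by (intro LIMSEQ_le_const2[OF F_left_limit]) (simp del: of_nat_Suc)

lemma F_ge_if_above:
  assumes "0 \<le> b" "measure M {b} = 0" "\<And>y. b < y \<Longrightarrow> t \<le> F y"
  shows "t \<le> F b"
  using F_right_limit[OF assms(1)] assms(2,3)
  by (intro LIMSEQ_le_const[of "\<lambda>n. F (b + 1 / Suc n)"]) (simp_all del: of_nat_Suc)

lemma star_disc_bdd:
  "bdd_above ((\<lambda>b. \<bar>measure M {0..<b} - real (card {i\<in>{1..N}. x i \<in> {0..<b}}) / real N\<bar>) ` {0..1})"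
proof (rule bdd_aboveI)
  fix y assume "y \<in> (\<lambda>b. \<bar>measure M {0..<b} - real (card {i\<in>{1..N}. x i \<in> {0..<b}}) / real N\<bar>) ` {0..1}"
  then obtain b where y: "y = \<bar>F b - real (card {i\<in>{1..N}. x i \<in> {0..<b}}) / real N\<bar>"
    unfolding F_def by auto
  show "y \<le> 1"
    unfolding y by (intro abs_diff_le_1_if_unit F_nonneg F_le_1 point_fraction_bounds)
qed

lemma star_disc_ge:
  "b \<in> {0..1} \<Longrightarrow> \<bar>F b - real (card {i\<in>{1..N}. x i \<in> {0..<b}}) / real N\<bar> \<le> star_disc M x N"
  unfolding star_disc_def F_def by (rule cSUP_upper[OF _ star_disc_bdd])

lemma star_disc_le:
  "(\<And>b. b \<in> {0..1} \<Longrightarrow> \<bar>F b - real (card {i\<in>{1..N}. x i \<in> {0..<b}}) / real N\<bar> \<le> B)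
    \<Longrightarrow> star_disc M x N \<le> B"
  unfolding star_disc_def F_def by (rule cSUP_least) auto

lemma star_disc_le_1: "star_disc M x N \<le> 1"
  by (intro star_disc_le abs_diff_le_1_if_unit F_nonneg F_le_1 point_fraction_bounds)

definition quantile :: "real \<Rightarrow> real" where
  "quantile u = Sup {y\<in>{0..1}. F y \<le> u}"

lemma quantile_range:
  assumes "0 \<le> u"
  shows "quantile u \<in> {0..1}"
proof -
  have "0 \<in> {y\<in>{0..1}. F y \<le> u}" using assms by (simp add: F_nonpos_arg)
  then show ?thesis
    unfolding quantile_def by (auto intro: cSup_upper cSup_least bdd_aboveI[where M=1])
qed

lemma quantile_less_iff:
  assumes u: "0 \<le> u" and b: "b \<in> {0..1}"
  shows "quantile u < b \<longleftrightarrow> u < F b"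
proof
  let ?S = "{y\<in>{0..1}. F y \<le> u}"
  have bdd: "bdd_above ?S" by (rule bdd_aboveI[where M=1]) auto
  assume "quantile u < b"
  show "u < F b"
  proof (rule ccontr)
    assume "\<not> u < F b"
    then have "b \<le> quantile u" unfolding quantile_def using b by (intro cSup_upper[OF _ bdd]) simp
    with \<open>quantile u < b\<close> show False by simp
  qed
next
  let ?S = "{y\<in>{0..1}. F y \<le> u}"
  assume ub: "u < F b"
  show "quantile u < b"
  proof (rule ccontr)
    assume "\<not> quantile u < b"
    have "F y \<le> u" if "y < b" for y
    proof (cases "y < 0")
      case True
      then show ?thesis using u by (simp add: F_nonpos_arg)
    next
      case False
      have "?S \<noteq> {}" using u by (auto intro!: exI[of _ 0] simp: F_nonpos_arg)
      moreover have "y < Sup ?S" using that \<open>\<not> quantile u < b\<close> unfolding quantile_def by simp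
      ultimately obtain s where "s \<in> ?S" "y < s" using less_cSupE by blast
      then show ?thesis using F_mono[of y s] by simp
    qed
    then have "F b \<le> u" by (rule F_le_if_below)
    with ub show False by simp
  qed
qed

lemma star_disc_quantile_le:
  assumes v: "\<And>i. i \<in> {1..N} \<Longrightarrow> 0 \<le> v i"
    and B: "\<And>t. t \<in> {0..1} \<Longrightarrow> \<bar>t - real (card {i\<in>{1..N}. v i < t}) / real N\<bar> \<le> B"
  shows "star_disc M (\<lambda>i. quantile (v i)) N \<le> B"
proof (rule star_disc_le)
  fix b :: real assume b: "b \<in> {0..1}"
  have "{i\<in>{1..N}. quantile (v i) \<in> {0..<b}} = {i\<in>{1..N}. v i < F b}"
    using v quantile_less_iff[OF v b] quantile_range[OF v] by auto
  moreover have "F b \<in> {0..1}" using F_nonneg F_le_1 by simp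
  ultimately show "\<bar>F b - real (card {i\<in>{1..N}. quantile (v i) \<in> {0..<b}}) / real N\<bar> \<le> B"
    using B by simp
qed

lemma exists_level_point:
  assumes no_atoms: "\<And>y. y \<in> {0..1} \<Longrightarrow> measure M {y} = 0" and t: "0 \<le> t" "t < 1"
  shows "\<exists>b\<in>{0..1}. F b = t \<and> (\<forall>y\<in>{0..1}. y < b \<longleftrightarrow> F y < t)"
proof -
  let ?S = "{y\<in>{0..1}. t \<le> F y}"
  define b where "b = Inf ?S"
  have "1 \<in> ?S" using F_1 no_atoms[of 1] t by simp
  then have S: "?S \<noteq> {}" "bdd_below ?S" by (auto intro: bdd_belowI[where m=0])
  have b: "b \<in> {0..1}" unfolding b_def using \<open>1 \<in> ?S\<close> S by (auto intro: cInf_lower cInf_greatest)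
  have below: "F y < t" if "y \<in> {0..1}" "y < b" for y
    using that cInf_lower[OF _ S(2), of y] unfolding b_def by force
  have "F b \<le> t"
  proof (rule F_le_if_below)
    fix y assume "y < b"
    with below show "F y \<le> t" using t b by (cases "y < 0") (auto simp: F_nonpos_arg less_imp_le)
  qed
  moreover have "t \<le> F b"
  proof (rule F_ge_if_above)
    show "0 \<le> b" "measure M {b} = 0" using b no_atoms by auto
    fix y assume "b < y"
    then obtain s where "s \<in> ?S" "s < y" using cInf_lessD[OF S(1)] unfolding b_def by blast
    then show "t \<le> F y" using F_mono[of s y] by simp
  qed
  ultimately have Fb: "F b = t" by simp
  have "y < b \<longleftrightarrow> F y < t" if "y \<in> {0..1}" for y
    using below[OF that] F_mono[of b y] Fb by force
  with b Fb show ?thesis by blast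
qed

lemma star_disc_jump:
  assumes "a \<in> {0..1}" "b \<in> {0..1}" "a \<le> x j" "x j < b" "j \<in> {1..N}"
  shows "1 / real N - (F b - F a) \<le> 2 * star_disc M x N"
proof -
  define cnt where "cnt b = real (card {i\<in>{1..N}. x i \<in> {0..<b}})" for b
  have "{i\<in>{1..N}. x i \<in> {0..<a}} \<subseteq> {i\<in>{1..N}. x i \<in> {0..<b}}"
    using assms by auto
  moreover have "j \<in> {i\<in>{1..N}. x i \<in> {0..<b}} - {i\<in>{1..N}. x i \<in> {0..<a}}"
    using assms by auto
  ultimately have "{i\<in>{1..N}. x i \<in> {0..<a}} \<subset> {i\<in>{1..N}. x i \<in> {0..<b}}" by blast
  then have "card {i\<in>{1..N}. x i \<in> {0..<a}} < card {i\<in>{1..N}. x i \<in> {0..<b}}"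
    by (rule psubset_card_mono[rotated]) simp
  then have "cnt a + 1 \<le> cnt b" unfolding cnt_def by simp
  then have "cnt a / real N + 1 / real N \<le> cnt b / real N"
    by (simp add: add_divide_distrib[symmetric] divide_right_mono)
  moreover have "\<bar>F a - cnt a / real N\<bar> \<le> star_disc M x N" "\<bar>F b - cnt b / real N\<bar> \<le> star_disc M x N"
    unfolding cnt_def by (rule star_disc_ge[OF assms(1)], rule star_disc_ge[OF assms(2)])
  ultimately show ?thesis by (simp add: abs_le_iff)
qed

lemma star_disc_ge_half_inverse:
  assumes no_atoms: "\<And>y. y \<in> {0..1} \<Longrightarrow> measure M {y} = 0" and N: "1 \<le> N"
    and x: "\<And>i. i \<in> {1..N} \<Longrightarrow> x i \<in> {0..1}"
  shows "1 / (2 * real N) \<le> star_disc M x N"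
proof (cases "\<exists>j\<in>{1..N}. x j < 1")
  case False
  then have "{i\<in>{1..N}. x i \<in> {0..<1}} = {}" by auto
  then have "1 \<le> star_disc M x N"
    using star_disc_ge[of 1 N x] F_1 no_atoms[of 1] by (simp only:) simp
  moreover have "1 / (2 * real N) \<le> 1" using N by simp
  ultimately show ?thesis by linarith
next
  case True
  then obtain j where j: "j \<in> {1..N}" "x j < 1" by blast
  let ?a = "x j"
  obtain n0 where n0: "1 / real (Suc n0) < 1 - ?a" using nat_approx_posE[of "1 - ?a"] j by auto
  have "1 / real N - (F (?a + 1 / Suc n) - F ?a) \<le> 2 * star_disc M x N" if "n0 \<le> n" for n
  proof (rule star_disc_jump)
    have "1 / real (Suc n) \<le> 1 / real (Suc n0)" using that by (simp add: frac_le)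
    moreover have "0 < 1 / real (Suc n)" by simp
    ultimately show "?a + 1 / Suc n \<in> {0..1}" "?a < ?a + 1 / Suc n"
      using n0 x[OF j(1)] by auto
  qed (use j x in auto)
  moreover have "(\<lambda>n. 1 / real N - (F (?a + 1 / Suc n) - F ?a)) \<longlonglongrightarrow> 1 / real N - (F ?a - F ?a)"
    using F_right_limit[of ?a] x[OF j(1)] no_atoms[OF x[OF j(1)]]
    by (intro tendsto_intros) simp_all
  ultimately have "1 / real N - (F ?a - F ?a) \<le> 2 * star_disc M x N"
    by (intro LIMSEQ_le_const2) auto
  then show ?thesis by simp
qed

(* The level point b of exists_level_point with F b = j/G turns the count of the quantised
   values below j into the count of the points below b. *)
lemma quantized_disc_le_star_disc:
  assumes no_atoms: "\<And>y. y \<in> {0..1} \<Longrightarrow> measure M {y} = 0"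
    and x: "\<And>k. x k \<in> {0..1}" and j: "j < G"
  shows "\<bar>real (card {i. i < n \<and> nat \<lfloor>F (x (Suc i)) * real G\<rfloor> < j}) - real n * real j / real G\<bar>
           \<le> real n * star_disc M x n"
proof (cases "n = 0")
  case False
  define t where "t = real j / real G"
  have "0 \<le> t" "t < 1" unfolding t_def using j by simp_all
  then obtain b where b: "b \<in> {0..1}" "F b = t" and below_iff: "\<And>y. y \<in> {0..1} \<Longrightarrow> y < b \<longleftrightarrow> F y < t"
    using exists_level_point[OF no_atoms] by blast
  have "nat \<lfloor>F y * real G\<rfloor> < j \<longleftrightarrow> F y < t" for y
    using F_nonneg[of y] j unfolding t_def by (simp add: floor_less_iff nat_less_iff pos_less_divide_eq)
  then have "{i\<in>{1..n}. x i \<in> {0..<b}} = {i\<in>{1..n}. nat \<lfloor>F (x (Suc (i - 1))) * real G\<rfloor> < j}"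
    using below_iff x by auto
  then have card_eq: "card {i\<in>{1..n}. x i \<in> {0..<b}} = card {i. i < n \<and> nat \<lfloor>F (x (Suc i)) * real G\<rfloor> < j}"
    using card_shift_index[of n "\<lambda>i. nat \<lfloor>F (x (Suc i)) * real G\<rfloor> < j"] by simp
  let ?cnt = "real (card {i. i < n \<and> nat \<lfloor>F (x (Suc i)) * real G\<rfloor> < j})"
  have "real n * (t - ?cnt / real n) = - (?cnt - real n * real j / real G)"
    using False unfolding t_def by (simp add: field_simps)
  have "real n * \<bar>F b - real (card {i\<in>{1..n}. x i \<in> {0..<b}}) / real n\<bar> = \<bar>real n * (t - ?cnt / real n)\<bar>"
    unfolding card_eq b(2) by (simp add: abs_mult)
  also have "\<dots> = \<bar>?cnt - real n * real j / real G\<bar>"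
    unfolding \<open>real n * (t - ?cnt / real n) = - (?cnt - real n * real j / real G)\<close> by (rule abs_minus_cancel)
  finally have "\<bar>?cnt - real n * real j / real G\<bar> = real n * \<bar>F b - real (card {i\<in>{1..n}. x i \<in> {0..<b}}) / real n\<bar>" ..
  also have "\<dots> \<le> real n * star_disc M x n"
    by (intro mult_left_mono star_disc_ge b(1)) simp
  finally show ?thesis .
qed simp

lemma star_disc_schmidt:
  assumes no_atoms: "\<And>y. y \<in> {0..1} \<Longrightarrow> measure M {y} = 0" and x: "\<And>k. x k \<in> {0..1}" and m: "1 \<le> m"
  shows "\<exists>n. 1 \<le> n \<and> n < 2^m \<and> real m / 2000 \<le> real n * star_disc M x n"
proof -
  obtain n j where n: "n < 2^m" and j: "j < 2^(m+2)"
    and big: "real m / 2000 \<le> \<bar>real (card {i. i < n \<and> nat \<lfloor>F (x (Suc i)) * 2^(m+2)\<rfloor> < j})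
                                   - real n * real j / 2^(m+2)\<bar>"
    using discrete_schmidt[of m "\<lambda>i. nat \<lfloor>F (x (Suc i)) * 2^(m+2)\<rfloor>"] by blast
  have "real m / 2000 \<le> real n * star_disc M x n"
    using big quantized_disc_le_star_disc[OF no_atoms, of x j "2^(m+2)" n] x j by simp
  moreover from this have "n \<noteq> 0" using m by (intro notI) simp
  ultimately show ?thesis using n by (intro exI[of _ n]) simp
qed

lemma star_disc_log_lower_frequently:
  assumes no_atoms: "\<And>y. y \<in> {0..1} \<Longrightarrow> measure M {y} = 0" and x: "\<And>k. x k \<in> {0..1}"
  shows "\<exists>\<^sub>\<infinity>N. 1/2000 * ln (real N) / real N \<le> star_disc M x N"
proof (rule ccontr)
  assume "\<not> ?thesis"
  then obtain N0 where N0: "\<And>n. N0 \<le> n \<Longrightarrow> star_disc M x n < 1/2000 * ln (real n) / real n"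
    unfolding not_INFM MOST_nat_le by (auto simp: not_le)
  define m where "m = 2000 * N0 + 1"
  have "1 \<le> m" unfolding m_def by simp
  then obtain n where n: "1 \<le> n" "n < 2^m" and big: "real m / 2000 \<le> real n * star_disc M x n"
    using star_disc_schmidt[OF no_atoms, of x m] x by blast
  show False
  proof (cases "n < N0")
    case True
    have "real n * star_disc M x n \<le> real n" using star_disc_le_1 by (simp add: mult_left_le)
    also have "\<dots> < real m / 2000" using True unfolding m_def by simp
    finally show False using big by simp
  next
    case False
    then have "real n * star_disc M x n < real n * (1/2000 * ln (real n) / real n)"
      using N0 n by (intro mult_strict_left_mono) simp_all
    also have "\<dots> = ln (real n) / 2000" using n by simp
    also have "\<dots> < real m / 2000"
    proof -
      have "ln (real n) < ln (2^m)" using n by (simp del: ln_realpow)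
      also have "\<dots> = real m * ln 2" by (simp add: ln_realpow)
      also have "\<dots> \<le> real m" using ln_2_less_1 by (simp add: mult_left_le)
      finally show ?thesis by simp
    qed
    finally show False using big by simp
  qed
qed

lemma exists_points_star_disc_le:
  assumes "1 \<le> N"
  shows "\<exists>x. (\<forall>i\<in>{1..N}. x i \<in> {0..1}) \<and> star_disc M x N \<le> 1 / real N"
proof (intro exI conjI ballI)
  let ?v = "\<lambda>i. real (i - 1) / real N"
  show "quantile (?v i) \<in> {0..1}" for i by (rule quantile_range) simp
  show "star_disc M (\<lambda>i. quantile (?v i)) N \<le> 1 / real N"
    by (rule star_disc_quantile_le) (simp, rule grid_star_bound[OF assms])
qed

lemma vdc_quantile_star_disc_le:
  assumes "2 \<le> N"
  shows "star_disc M (\<lambda>k. quantile (vdc (k - 1))) N \<le> (2 / ln 2) * ln (real N) / real N"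
  using vdc_range vdc_star_bound[OF assms] by (intro star_disc_quantile_le) auto

end

theorem theorem3p2:
  fixes M :: "real measure"
  assumes "borel_prob_on_unit M"
  shows "(\<exists>c. \<forall>N\<ge>1. \<exists>x :: nat \<Rightarrow> real. (\<forall>i\<in>{1..N}. x i \<in> {0..1}) \<and> star_disc M x N \<le> c / real N)
    \<and> (\<exists>(x :: nat \<Rightarrow> real) c. (\<forall>k. x k \<in> {0..1}) \<and>
          (\<forall>N\<ge>2. star_disc M x N \<le> c * ln (real N) / real N))
    \<and> ((\<forall>y\<in>{0..1}. measure M {y} = 0) \<longrightarrow>
          (\<forall>N\<ge>1. \<forall>x :: nat \<Rightarrow> real. (\<forall>i\<in>{1..N}. x i \<in> {0..1}) \<longrightarrow>
               star_disc M x N \<ge> 1 / (2 * real N))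
        \<and> (\<exists>c>0. \<forall>x :: nat \<Rightarrow> real. (\<forall>k. x k \<in> {0..1}) \<longrightarrow>
               (\<exists>\<^sub>\<infinity>N. star_disc M x N \<ge> c * ln (real N) / real N)))"
proof -
  interpret unit_interval_prob M by unfold_locales (rule assms)
  let ?vdc = "\<lambda>k. quantile (vdc (k - 1))"
  have "\<exists>c. \<forall>N\<ge>1. \<exists>x :: nat \<Rightarrow> real. (\<forall>i\<in>{1..N}. x i \<in> {0..1}) \<and> star_disc M x N \<le> c / real N"
    by (intro exI[of _ 1] allI impI exists_points_star_disc_le)
  moreover have "\<exists>(x :: nat \<Rightarrow> real) c. (\<forall>k. x k \<in> {0..1}) \<and>
      (\<forall>N\<ge>2. star_disc M x N \<le> c * ln (real N) / real N)"
    using vdc_range by (intro exI[of _ ?vdc] exI[of _ "2 / ln 2"] conjI allI impI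
        vdc_quantile_star_disc_le quantile_range) simp_all
  moreover have "(\<forall>y\<in>{0..1}. measure M {y} = 0) \<longrightarrow>
          (\<forall>N\<ge>1. \<forall>x :: nat \<Rightarrow> real. (\<forall>i\<in>{1..N}. x i \<in> {0..1}) \<longrightarrow> star_disc M x N \<ge> 1 / (2 * real N))
        \<and> (\<exists>c>0. \<forall>x :: nat \<Rightarrow> real. (\<forall>k. x k \<in> {0..1}) \<longrightarrow>
               (\<exists>\<^sub>\<infinity>N. star_disc M x N \<ge> c * ln (real N) / real N))"
    by (intro impI conjI allI exI[of _ "1/2000"] star_disc_ge_half_inverse star_disc_log_lower_frequently)
      auto
  ultimately show ?thesis by (intro conjI)
qed

end
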